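(* Let $G$ be a profinite group that is a Cartesian product of non-abelian finite simple groups. If every element of $G$ has a countable Engel sink, then $G$ is finite.
   Context: Commutators are left-normed, $[a,b]=a^{-1}b^{-1}ab$, and $[x,{}_n g]=[x,g,\dots,g]$ with $g$ repeated $n$ times. An Engel sink of an element $g$ of a group $G$ is a set $\mathscr E(g)\subseteq G$ such that for every $x\in G$ there is a positive integer $n(x,g)$ with $[x,{}_n g]\in\mathscr E(g)$ for all $n\ge n(x,g)$. "Countable" means finite or denumerable. *)

theory Defs
  imports "HOL-Algebra.Algebra" "HOL-Library.Countable_Set"
begin

definition group_commutator :: "('a, 'b) monoid_scheme \<Rightarrow> 'a \<Rightarrow> 'a \<Rightarrow> 'a" where
  "group_commutator G a b = inv\<^bsub>G\<^esub> a \<otimes>\<^bsub>G\<^esub> inv\<^bsub>G\<^esub> b \<otimes>\<^bsub>G\<^esub> a \<otimes>\<^bsub>G\<^esub> b"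

fun engel_comm :: "('a, 'b) monoid_scheme \<Rightarrow> 'a \<Rightarrow> 'a \<Rightarrow> nat \<Rightarrow> 'a" where
  "engel_comm G x g 0 = x"
| "engel_comm G x g (Suc n) = group_commutator G (engel_comm G x g n) g"

definition engel_sink :: "('a, 'b) monoid_scheme \<Rightarrow> 'a \<Rightarrow> 'a set \<Rightarrow> bool" where
  "engel_sink G g E \<longleftrightarrow> E \<subseteq> carrier G \<and>
     (\<forall>x\<in>carrier G. \<exists>m>0. \<forall>n\<ge>m. engel_comm G x g n \<in> E)"

end

theory Submission
  imports Defs
begin

(* A finite Engel group satisfies the normalizer condition, so in a finite simple Engel group
   every maximal subgroup is normal, hence trivial, and the group is abelian. Hence each factor
   S_i has elements x_i, g_i with [x_i,_n g_i] <> 1 for all n. Put g = (g_i) and, for T a subset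
   of I, let x_T be x_i on T and 1 off T: every [x_T,_n g] has support exactly T, so an Engel
   sink of g contains an injective image of Pow I. If it is countable, I is finite, and so is G. *)

(* Multiset's ASCII syntax for proper submultisets clashes with left cosets. *)
no_notation (ASCII) subset_mset (infix \<open><#\<close> 50)

definition engel_group :: "('a, 'b) monoid_scheme \<Rightarrow> bool" where
  "engel_group G \<longleftrightarrow> (\<forall>x\<in>carrier G. \<forall>g\<in>carrier G. \<exists>n. engel_comm G x g n = \<one>\<^bsub>G\<^esub>)"

context group
begin

lemma engel_comm_in_subgroup:
  assumes "subgroup H G" "x \<in> H" "g \<in> H"
  shows "engel_comm G x g n \<in> H"
  by (induction n)
    (use assms in \<open>auto simp: group_commutator_def subgroup.m_closed subgroup.m_inv_closed\<close>)

lemma engel_comm_closed: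
  "x \<in> carrier G \<Longrightarrow> g \<in> carrier G \<Longrightarrow> engel_comm G x g n \<in> carrier G"
  using engel_comm_in_subgroup[OF subgroup_self] .

lemma engel_comm_one: "g \<in> carrier G \<Longrightarrow> engel_comm G \<one> g n = \<one>"
  by (induction n) (simp_all add: group_commutator_def m_assoc)

lemma conjugate_eq_image: "g <# H #> inv g = (\<lambda>h. g \<otimes> h \<otimes> inv g) ` H"
  by (auto simp: l_coset_def r_coset_def)

lemma conjugate_mono: "H \<subseteq> K \<Longrightarrow> g <# H #> inv g \<subseteq> g <# K #> inv g"
  by (auto simp: conjugate_eq_image)

lemma card_conjugate:
  assumes "H \<subseteq> carrier G" "g \<in> carrier G"
  shows "card (g <# H #> inv g) = card H"
  unfolding conjugate_eq_image
  by (rule card_image) (use assms in \<open>auto intro!: inj_onI dest: conjugation_is_inj\<close>)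

lemma conjugate_subset_subgroup:
  assumes "subgroup H G" "K \<subseteq> H" "g \<in> H"
  shows "g <# K #> inv g \<subseteq> H"
  using assms by (auto simp: conjugate_eq_image subgroup.m_closed subgroup.m_inv_closed)

lemma mem_normalizer_iff:
  "H \<subseteq> carrier G \<Longrightarrow> g \<in> normalizer G H \<longleftrightarrow> g \<in> carrier G \<and> g <# H #> inv g = H"
  by (simp add: normalizer_def stabilizer_def)

lemma subgroup_subset_normalizer: "subgroup H G \<Longrightarrow> H \<subseteq> normalizer G H"
  using subgroup_in_normalizer normal.axioms(1) subgroup.subset by fastforce

lemma normal_if_normalizer_eq_carrier:
  assumes "subgroup H G" "normalizer G H = carrier G"
  shows "H \<lhd> G"
  unfolding normal_inv_iff
proof (intro conjI ballI)
  fix x h assume x: "x \<in> carrier G" and h: "h \<in> H"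
  have "x <# H #> inv x = H"
    using assms x mem_normalizer_iff[OF subgroup.subset[OF assms(1)]] by blast
  moreover have "x \<otimes> h \<otimes> inv x \<in> x <# H #> inv x"
    using h unfolding conjugate_eq_image by blast
  ultimately show "x \<otimes> h \<otimes> inv x \<in> H"
    by simp
qed fact

lemma mem_conjugate_if_commutator_mem:
  assumes "subgroup M G" "a \<in> carrier G" "y \<in> M" "group_commutator G a y \<in> M"
  shows "y \<in> a <# M #> inv a"
proof -
  have y: "y \<in> carrier G"
    using subgroup.mem_carrier[OF assms(1,3)] .
  have "inv a \<otimes> y \<otimes> a = inv (group_commutator G a y \<otimes> inv y)"
    using assms(2) y by (simp add: group_commutator_def inv_mult_group m_assoc)
  also have "\<dots> \<in> M"
    using assms by (intro subgroup.m_inv_closed subgroup.m_closed) auto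
  finally have "a \<otimes> (inv a \<otimes> y \<otimes> a) \<otimes> inv a \<in> a <# M #> inv a"
    unfolding conjugate_eq_image by blast
  then show ?thesis
    using conjugation_is_surj[OF assms(2) y] by simp
qed

lemma engel_walk_leaves_subgroup:
  assumes "engel_group G" "subgroup M G" "subgroup N G" "u \<in> N - M" "y \<in> N \<inter> M"
  obtains a where "a \<in> N - M" "y \<in> a <# M #> inv a"
proof -
  have "u \<in> carrier G" "y \<in> carrier G"
    using assms(4,5) subgroup.subset[OF assms(3)] by auto
  then obtain n where "engel_comm G u y n = \<one>"
    using assms(1) unfolding engel_group_def by blast
  then have "\<exists>k<n. (\<forall>i\<le>k. engel_comm G u y i \<notin> M) \<and> engel_comm G u y (Suc k) \<in> M"
    using assms(2,4) by (intro ex_least_nat_less) (auto intro: subgroup.one_closed)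
  then obtain k where k: "engel_comm G u y k \<notin> M" "engel_comm G u y (Suc k) \<in> M"
    by blast
  let ?a = "engel_comm G u y k"
  have "?a \<in> N"
    using assms(3-5) by (intro engel_comm_in_subgroup) auto
  moreover have "y \<in> ?a <# M #> inv ?a"
    using k(2) assms(5) subgroup.mem_carrier[OF assms(3) \<open>?a \<in> N\<close>]
    by (intro mem_conjugate_if_commutator_mem[OF assms(2)]) auto
  ultimately show ?thesis
    using that k(1) by blast
qed

lemma inter_conjugate_psubset:
  assumes "subgroup K G" "finite K" "w \<in> carrier G" "w \<notin> normalizer G K"
  shows "K \<inter> (w <# K #> inv w) \<subset> K" "K \<inter> (w <# K #> inv w) \<subset> w <# K #> inv w"
proof -
  have KG: "K \<subseteq> carrier G"
    using subgroup.subset[OF assms(1)] .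
  have "finite (w <# K #> inv w)"
    using assms(2) by (simp add: conjugate_eq_image)
  moreover have "card (w <# K #> inv w) = card K"
    using card_conjugate[OF KG assms(3)] .
  moreover have "w <# K #> inv w \<noteq> K"
    using assms(3,4) mem_normalizer_iff[OF KG] by simp
  ultimately show "K \<inter> (w <# K #> inv w) \<subset> K"
    and "K \<inter> (w <# K #> inv w) \<subset> w <# K #> inv w"
    using card_subset_eq[OF assms(2), of "w <# K #> inv w"]
      card_subset_eq[of "w <# K #> inv w" K] by auto
qed

lemma card_inter_conjugate_gt:
  assumes "finite K" "subgroup D G" "D \<subseteq> K" "a \<in> normalizer G D"
    and "y \<in> K - D" "y \<in> a <# K #> inv a"
  shows "card D < card (K \<inter> (a <# K #> inv a))"
proof -
  have "D = a <# D #> inv a"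
    using assms(4) mem_normalizer_iff[OF subgroup.subset[OF assms(2)]] by simp
  also have "\<dots> \<subseteq> a <# K #> inv a"
    using assms(3) by (rule conjugate_mono)
  finally have "insert y D \<subseteq> K \<inter> (a <# K #> inv a)"
    using assms(3,5,6) by blast
  then have "card (insert y D) \<le> card (K \<inter> (a <# K #> inv a))"
    using assms(1) by (intro card_mono) auto
  moreover have "card (insert y D) = Suc (card D)"
    using finite_subset[OF assms(3,1)] assms(5) by simp
  ultimately show ?thesis
    by simp
qed

(* If K were self-normalizing in H, pick a conjugate C of K meeting K in a largest possible D.
   By induction D is properly normalized both in K and in C, and an Engel walk inside the
   normalizer of D yields a conjugate of K meeting K in more than D. *)

lemma normalizer_condition_step:
  assumes fin: "finite (carrier G)" and engel: "engel_group G"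
    and H: "subgroup H G" and K: "subgroup K G" "K \<subset> H"
    and IH: "\<And>L J. subgroup L G \<Longrightarrow> subgroup J G \<Longrightarrow> J \<subset> L \<Longrightarrow> card L < card H \<Longrightarrow>
               \<exists>y\<in>L - J. y \<in> normalizer G J"
  shows "\<exists>y\<in>H - K. y \<in> normalizer G K"
proof (rule ccontr)
  assume self_normalizing: "\<not> ?thesis"
  have KG: "K \<subseteq> carrier G" and HG: "H \<subseteq> carrier G"
    using H K subgroup.subset by auto
  have finK: "finite K" and finH: "finite H"
    using KG HG fin finite_subset by auto
  let ?W = "H - normalizer G K" and ?f = "\<lambda>w. card (K \<inter> (w <# K #> inv w))"
  have "?W \<noteq> {}"
    using K self_normalizing by blast
  moreover have fin_f: "finite (?f ` ?W)"
    using finH by simp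
  ultimately obtain w where w: "w \<in> ?W" "?f w = Max (?f ` ?W)"
    using Max_in by (metis (no_types, lifting) empty_is_image imageE)
  have w_max: "?f w' \<le> ?f w" if "w' \<in> ?W" for w'
    using w(2) fin_f that by simp
  have wG: "w \<in> carrier G"
    using w HG by blast
  define C where "C = w <# K #> inv w"
  define D where "D = K \<inter> C"
  have C: "subgroup C G" "C \<subseteq> H" "card C = card K"
    using subgroup_conjugation_is_surj2[OF wG K(1)] card_conjugate[OF KG wG]
      conjugate_subset_subgroup[OF H K(2)[THEN psubset_imp_subset]] w
    by (auto simp: C_def)
  have DK: "D \<subset> K" and DC: "D \<subset> C"
    using inter_conjugate_psubset[OF K(1) finK wG] w unfolding D_def C_def by auto
  have cardK: "card K < card H"
    using K finH psubset_card_mono by blast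
  have D: "subgroup D G"
    unfolding D_def using K(1) C(1) by (rule subgroups_Inter_pair)
  obtain y where y: "y \<in> K - D" "y \<in> normalizer G D"
    using IH[OF K(1) D DK cardK] by blast
  obtain u where u: "u \<in> C - D" "u \<in> normalizer G D"
    using IH[OF C(1) D DC] C(3) cardK by auto
  define N where "N = H \<inter> normalizer G D"
  have N: "subgroup N G"
    unfolding N_def using H normalizer_imp_subgroup[OF subgroup.subset[OF D]]
    by (rule subgroups_Inter_pair)
  have uN: "u \<in> N - K" and yN: "y \<in> N \<inter> K"
    using u y C(2) K(2) by (auto simp: N_def D_def)
  obtain a where a: "a \<in> N - K" "y \<in> a <# K #> inv a"
    using engel_walk_leaves_subgroup[OF engel K(1) N uN yN] .
  have "card D < ?f a"
    using a y D DK finK by (intro card_inter_conjugate_gt) (auto simp: N_def)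
  moreover have "?f a \<le> ?f w"
    using a self_normalizing by (intro w_max) (auto simp: N_def)
  ultimately show False
    by (simp add: D_def C_def)
qed

lemma engel_normalizer_condition:
  assumes "finite (carrier G)" "engel_group G" "subgroup H G" "subgroup K G" "K \<subset> H"
  shows "\<exists>y\<in>H - K. y \<in> normalizer G K"
  using assms(3-5)
proof (induction "card H" arbitrary: H K rule: less_induct)
  case less
  show ?case
    by (rule normalizer_condition_step[OF assms(1,2) less.prems]) (use less.hyps in blast)
qed

lemma comm_group_if_no_proper_nontrivial_subgroup:
  assumes "\<And>H. subgroup H G \<Longrightarrow> H = {\<one>} \<or> H = carrier G"
  shows "comm_group G"
proof (rule group_comm_groupI)
  fix x z assume x: "x \<in> carrier G" and z: "z \<in> carrier G"
  let ?C = "stabilizer G (\<lambda>g. \<lambda>h\<in>carrier G. g \<otimes> h \<otimes> inv g) x"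
  have "subgroup ?C G"
    using group_action.stabilizer_subgroup[OF action_by_conjugation x] .
  moreover have "x \<in> ?C"
    using x by (simp add: stabilizer_def m_assoc)
  ultimately have "x = \<one> \<or> ?C = carrier G"
    using assms by blast
  then show "x \<otimes> z = z \<otimes> x"
  proof
    assume "?C = carrier G"
    then have "z \<otimes> x \<otimes> inv z = x"
      using x z by (auto simp: stabilizer_def)
    then have "x \<otimes> z = z \<otimes> x \<otimes> inv z \<otimes> z"
      by simp
    also have "\<dots> = z \<otimes> x"
      using x z by (simp add: m_assoc)
    finally show ?thesis .
  qed (use z in simp)
qed

lemma engel_maximal_subgroup_normal:
  assumes "finite (carrier G)" "engel_group G" "subgroup M G" "M \<subset> carrier G"
    and maximal: "\<And>L. subgroup L G \<Longrightarrow> M \<subseteq> L \<Longrightarrow> L \<subset> carrier G \<Longrightarrow> L = M"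
  shows "M \<lhd> G"
proof -
  obtain y where y: "y \<in> carrier G - M" "y \<in> normalizer G M"
    using engel_normalizer_condition[OF assms(1,2) subgroup_self assms(3,4)] by blast
  have "subgroup (normalizer G M) G"
    using normalizer_imp_subgroup[OF subgroup.subset[OF assms(3)]] .
  moreover have "M \<subseteq> normalizer G M"
    using subgroup_subset_normalizer[OF assms(3)] .
  ultimately have "normalizer G M = carrier G"
    using maximal[of "normalizer G M"] y subgroup.subset by blast
  then show ?thesis
    using normal_if_normalizer_eq_carrier[OF assms(3)] by blast
qed

lemma engel_simple_group_is_comm:
  assumes fin: "finite (carrier G)" and engel: "engel_group G" and simple: "simple_group G"
  shows "comm_group G"
proof (rule comm_group_if_no_proper_nontrivial_subgroup)
  fix H assume H: "subgroup H G"
  show "H = {\<one>} \<or> H = carrier G"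
  proof (rule disjCI)
    assume "H \<noteq> carrier G"
    let ?P = "{L. subgroup L G \<and> L \<subset> carrier G}"
    have "finite ?P"
      by (rule finite_subset[of _ "Pow (carrier G)"]) (use fin in auto)
    moreover have "H \<in> ?P"
      using H \<open>H \<noteq> carrier G\<close> subgroup.subset[OF H] by auto
    ultimately have "\<exists>M\<in>?P. H \<subseteq> M \<and> (\<forall>L\<in>?P. M \<subseteq> L \<longrightarrow> M = L)"
      by (rule finite_has_maximal2)
    then obtain M where M: "M \<in> ?P" "H \<subseteq> M" and maximal: "\<forall>L\<in>?P. M \<subseteq> L \<longrightarrow> M = L"
      by auto
    have "M \<lhd> G"
      using M(1) maximal by (intro engel_maximal_subgroup_normal[OF fin engel]) auto
    then have "M = {\<one>}"
      using simple_group.no_real_normal_subgroup[OF simple, of M] M(1) by auto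
    then show "H = {\<one>}"
      using M(2) subgroup.one_closed[OF H] by blast
  qed
qed

end

lemma (in group_hom) engel_comm_hom:
  assumes "x \<in> carrier G" "g \<in> carrier G"
  shows "h (engel_comm G x g n) = engel_comm H (h x) (h g) n"
  by (induction n) (simp_all add: assms group_commutator_def G.engel_comm_closed)

lemma (in group_hom) engel_sink_image:
  assumes surj: "h ` carrier G = carrier H" and g: "g \<in> carrier G" and sink: "engel_sink G g E"
  shows "engel_sink H (h g) (h ` E)"
  unfolding engel_sink_def
proof (intro conjI ballI)
  show "h ` E \<subseteq> carrier H"
    using sink surj unfolding engel_sink_def by blast
  fix y assume "y \<in> carrier H"
  then obtain x where x: "x \<in> carrier G" "y = h x"
    using surj by blast
  then obtain m where "m > 0" "\<forall>n\<ge>m. engel_comm G x g n \<in> E"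
    using sink unfolding engel_sink_def by blast
  then show "\<exists>m>0. \<forall>n\<ge>m. engel_comm H y (h g) n \<in> h ` E"
    using x g by (auto simp: engel_comm_hom[symmetric])
qed

definition countable_engel_sinks :: "('a, 'b) monoid_scheme \<Rightarrow> bool" where
  "countable_engel_sinks G \<longleftrightarrow> (\<forall>g\<in>carrier G. \<exists>E. engel_sink G g E \<and> countable E)"

lemma countable_engel_sinks_iso:
  assumes "group G" "group H" "G \<cong> H" "countable_engel_sinks G"
  shows "countable_engel_sinks H"
  unfolding countable_engel_sinks_def
proof
  obtain h where h: "h \<in> iso G H"
    using assms(3) unfolding is_iso_def by auto
  have surj: "h ` carrier G = carrier H"
    using iso_iff[THEN iffD1, OF h] by simp
  interpret group_hom G H h
    using assms(1,2) h by (simp add: group_hom_def group_hom_axioms_def iso_imp_homomorphism)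
  fix y assume "y \<in> carrier H"
  then obtain g where g: "g \<in> carrier G" "y = h g"
    using surj by blast
  then obtain E where "engel_sink G g E" "countable E"
    using assms(4) unfolding countable_engel_sinks_def by blast
  then show "\<exists>E. engel_sink H y E \<and> countable E"
    using engel_sink_image[OF surj g(1)] g(2) by blast
qed

lemma group_commutator_product_group:
  assumes "\<And>i. i \<in> I \<Longrightarrow> group (S i)"
    and "x \<in> carrier (product_group I S)" "g \<in> carrier (product_group I S)"
  shows "group_commutator (product_group I S) x g = (\<lambda>i\<in>I. group_commutator (S i) (x i) (g i))"
  using assms by (auto simp: group_commutator_def intro!: restrict_ext)

lemma engel_comm_product_group:
  assumes grp: "\<And>i. i \<in> I \<Longrightarrow> group (S i)"
    and x: "x \<in> carrier (product_group I S)" and g: "g \<in> carrier (product_group I S)"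
  shows "engel_comm (product_group I S) x g n = (\<lambda>i\<in>I. engel_comm (S i) (x i) (g i) n)"
proof (induction n)
  case 0
  show ?case
    using x by simp
next
  case (Suc n)
  have "engel_comm (product_group I S) x g n \<in> carrier (product_group I S)"
    using group.engel_comm_closed[OF product_group[OF grp] x g] .
  then show ?case
    using Suc g grp by (simp add: group_commutator_product_group cong: if_cong)
qed

lemma countable_Pow_imp_finite:
  assumes "countable (Pow A)"
  shows "finite A"
proof (rule ccontr)
  assume "infinite A"
  have "countable ((\<lambda>a. {a}) ` A)"
    using assms by (rule countable_subset[rotated]) auto
  then have "countable A"
    by (rule countable_image_inj_on) (simp add: inj_on_def)
  have "(\<lambda>a. from_nat_into (Pow A) (to_nat_on A a)) ` A = from_nat_into (Pow A) ` to_nat_on A ` A"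
    by (simp add: image_image)
  also have "\<dots> = Pow A"
    using assms \<open>countable A\<close> \<open>infinite A\<close> by (auto simp: image_to_nat_on intro!: range_from_nat_into)
  finally show False
    using Cantors_theorem by blast
qed

lemma finite_index_if_countable_engel_sinks:
  assumes grp: "\<And>i. i \<in> I \<Longrightarrow> group (S i)"
    and non_engel: "\<And>i. i \<in> I \<Longrightarrow> \<not> engel_group (S i)"
    and sinks: "countable_engel_sinks (product_group I S)"
  shows "finite I"
proof -
  let ?P = "product_group I S"
  obtain x g where xg: "\<And>i. i \<in> I \<Longrightarrow> x i \<in> carrier (S i) \<and> g i \<in> carrier (S i) \<and>
      (\<forall>n. engel_comm (S i) (x i) (g i) n \<noteq> \<one>\<^bsub>S i\<^esub>)"
    using non_engel unfolding engel_group_def by metis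
  define g' where "g' = restrict g I"
  define x' where "x' T = (\<lambda>i\<in>I. if i \<in> T then x i else \<one>\<^bsub>S i\<^esub>)" for T
  have g': "g' \<in> carrier ?P"
    using xg by (simp add: g'_def)
  have x': "x' T \<in> carrier ?P" for T
    using xg grp by (simp add: x'_def group.is_monoid)
  have support: "{i \<in> I. engel_comm ?P (x' T) g' n i \<noteq> \<one>\<^bsub>S i\<^esub>} = T" if "T \<subseteq> I" for T n
  proof -
    have "engel_comm ?P (x' T) g' n i = engel_comm (S i) (x' T i) (g' i) n" if "i \<in> I" for i
      using engel_comm_product_group[OF grp x' g'] that by simp
    then show ?thesis
      using that xg group.engel_comm_one[OF grp] by (auto simp: x'_def g'_def split: if_split_asm)
  qed
  obtain E where E: "engel_sink ?P g' E" "countable E"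
    using sinks g' unfolding countable_engel_sinks_def by blast
  have "\<forall>T. \<exists>k. engel_comm ?P (x' T) g' k \<in> E"
    using E(1) x' unfolding engel_sink_def by (meson le_refl)
  then obtain m where m: "\<And>T. engel_comm ?P (x' T) g' (m T) \<in> E"
    by metis
  let ?F = "\<lambda>T. engel_comm ?P (x' T) g' (m T)"
  have "inj_on ?F (Pow I)"
    by (rule inj_on_inverseI[where g = "\<lambda>f. {i \<in> I. f i \<noteq> \<one>\<^bsub>S i\<^esub>}"]) (use support in auto)
  moreover have "countable (?F ` Pow I)"
    using m by (intro countable_subset[OF _ E(2)]) auto
  ultimately show ?thesis
    using countable_Pow_imp_finite countable_image_inj_on by blast
qed

theorem lemma7p1:
  fixes G :: "('g, 'c) monoid_scheme"
    and S :: "'i \<Rightarrow> ('a, 'b) monoid_scheme"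
    and I :: "'i set"
  assumes "group G"
    and "\<And>i. i \<in> I \<Longrightarrow> simple_group (S i)"
    and "\<And>i. i \<in> I \<Longrightarrow> finite (carrier (S i))"
    and "\<And>i. i \<in> I \<Longrightarrow> \<not> comm_group (S i)"
    and "G \<cong> product_group I S"
    and "\<forall>g\<in>carrier G. \<exists>E. engel_sink G g E \<and> countable E"
  shows "finite (carrier G)"
proof -
  have grp: "\<And>i. i \<in> I \<Longrightarrow> group (S i)"
    using assms(2) simple_group.axioms(1) by blast
  have "\<And>i. i \<in> I \<Longrightarrow> \<not> engel_group (S i)"
    using group.engel_simple_group_is_comm grp assms(2-4) by blast
  moreover have "countable_engel_sinks (product_group I S)"
    using countable_engel_sinks_iso[OF assms(1) product_group[OF grp] assms(5)] assms(6)
    by (simp add: countable_engel_sinks_def)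
  ultimately have "finite I"
    using finite_index_if_countable_engel_sinks grp by blast
  then have "finite (carrier (product_group I S))"
    using assms(3) by (simp add: finite_PiE)
  then show ?thesis
    using iso_finite[OF assms(5)] by simp
qed

end
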